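(* Let $(H,wt)$ be a weighted graph. For each $a\in V(H)$ take a copy of $C_{wt(a)}$ and fix a vertex $v(a)$ of it, and let $G$ be the disjoint union of these copies together with a dashed edge $v(a)\dashrightarrow v(b)$ for each edge $ab\in E(H)$. Then $X_{(H,wt)}(x)=\mathscr{X}_G(x)$.
   Context: A weighted graph is a finite simple graph $H$ with $wt:V(H)\to\mathbb{P}$; its extended chromatic symmetric function is $X_{(H,wt)}(x)=\sum_\kappa\prod_{a\in V(H)}x_{\kappa(a)}^{wt(a)}$ over proper colourings $\kappa:V(H)\to\mathbb{P}$ of $H$ (adjacent vertices get different colours). $C_m$ is the directed cycle on $m$ vertices all of whose edges are double (for $m=1$ a single vertex with no edges). An edge-coloured digraph is a finite simple digraph with each edge dashed ($\dashrightarrow$), solid ($\rightarrow$) or double ($\Rightarrow$); its proper vertex-colourings are $\kappa:V\to\mathbb{P}$ with $\kappa(a)\ne\kappa(b)$, $\kappa(a)<\kappa(b)$, $\kappa(a)\le\kappa(b)$ for dashed, solid, double edges $(a,b)$ respectively, and $\mathscr{X}_G(x)=\sum_\kappa\prod_{a}x_{\kappa(a)}$ over them. *)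

theory Defs
  imports "HOL-Library.FuncSet"
begin

text \<open>Symmetric functions in variables x_1, x_2, ... (colours are positive integers) are
represented by their coefficient function: a monomial is an exponent vector
m :: nat \<Rightarrow> nat (m i = exponent of x_i), and the series is the map from monomials to
coefficients.\<close>

definition weighted_graph :: "'a set \<Rightarrow> 'a set set \<Rightarrow> ('a \<Rightarrow> nat) \<Rightarrow> bool" where
  "weighted_graph V E wt \<longleftrightarrow> finite V \<and>
     (\<forall>e\<in>E. \<exists>a b. e = {a, b} \<and> a \<noteq> b \<and> a \<in> V \<and> b \<in> V) \<and>
     (\<forall>a\<in>V. 1 \<le> wt a)"

definition proper_colourings :: "'a set \<Rightarrow> 'a set set \<Rightarrow> ('a \<Rightarrow> nat) set" where
  "proper_colourings V E =
     {\<kappa> \<in> V \<rightarrow>\<^sub>E {1..}. \<forall>a b. {a, b} \<in> E \<longrightarrow> \<kappa> a \<noteq> \<kappa> b}"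

text \<open>Exponent vector of the monomial prod_{a in V} x_{kappa a}^{wt a}.\<close>
definition wmono :: "'a set \<Rightarrow> ('a \<Rightarrow> nat) \<Rightarrow> ('a \<Rightarrow> nat) \<Rightarrow> (nat \<Rightarrow> nat)" where
  "wmono V wt \<kappa> = (\<lambda>i. \<Sum>a\<in>{a\<in>V. \<kappa> a = i}. wt a)"

definition XH :: "'a set \<Rightarrow> 'a set set \<Rightarrow> ('a \<Rightarrow> nat) \<Rightarrow> (nat \<Rightarrow> nat) \<Rightarrow> nat" where
  "XH V E wt = (\<lambda>m. card {\<kappa> \<in> proper_colourings V E. wmono V wt \<kappa> = m})"

text \<open>Edge-coloured digraph: vertex set W, dashed edges Da, solid edges So, double edges Do.\<close>
definition ecd_colourings ::
  "'v set \<Rightarrow> ('v \<times> 'v) set \<Rightarrow> ('v \<times> 'v) set \<Rightarrow> ('v \<times> 'v) set \<Rightarrow> ('v \<Rightarrow> nat) set" where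
  "ecd_colourings W Da So Do =
     {\<kappa> \<in> W \<rightarrow>\<^sub>E {1..}. (\<forall>(a, b)\<in>Da. \<kappa> a \<noteq> \<kappa> b) \<and> (\<forall>(a, b)\<in>So. \<kappa> a < \<kappa> b)
        \<and> (\<forall>(a, b)\<in>Do. \<kappa> a \<le> \<kappa> b)}"

definition XG ::
  "'v set \<Rightarrow> ('v \<times> 'v) set \<Rightarrow> ('v \<times> 'v) set \<Rightarrow> ('v \<times> 'v) set \<Rightarrow> (nat \<Rightarrow> nat) \<Rightarrow> nat" where
  "XG W Da So Do = (\<lambda>m. card {\<kappa> \<in> ecd_colourings W Da So Do. wmono W (\<lambda>_. 1) \<kappa> = m})"

text \<open>Construction of G: the copy of C_{wt a} has vertices (a,0),...,(a,wt a - 1) and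
double edges (a,i) => (a,(i+1) mod wt a) (none if wt a = 1).\<close>
definition cycV :: "'a set \<Rightarrow> ('a \<Rightarrow> nat) \<Rightarrow> ('a \<times> nat) set" where
  "cycV V wt = {(a, i). a \<in> V \<and> i < wt a}"

definition cycDo :: "'a set \<Rightarrow> ('a \<Rightarrow> nat) \<Rightarrow> (('a \<times> nat) \<times> ('a \<times> nat)) set" where
  "cycDo V wt = {((a, i), (a, Suc i mod wt a)) | a i. a \<in> V \<and> i < wt a \<and> 2 \<le> wt a}"

definition dashE :: "'a set set \<Rightarrow> ('a \<Rightarrow> nat) \<Rightarrow> ('a \<Rightarrow> 'a \<Rightarrow> bool)
    \<Rightarrow> (('a \<times> nat) \<times> ('a \<times> nat)) set" where
  "dashE E v ori = {((a, v a), (b, v b)) | a b. {a, b} \<in> E \<and> ori a b}"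

end

theory Submission
  imports Defs
begin

text \<open>Around the cycle of double edges on the copy of \<open>C\<^bsub>wt a\<^esub>\<close> a colouring can only
weakly increase, so it is constant on the copy.  Hence the colourings of \<open>G\<close> are exactly the
lifts \<open>(a, i) \<mapsto> \<kappa> a\<close> of colourings \<open>\<kappa>\<close> of \<open>H\<close>; the dashed edges make the lift proper iff
\<open>\<kappa>\<close> is, and the \<open>wt a\<close> vertices of the copy of \<open>C\<^bsub>wt a\<^esub>\<close> turn \<open>x\<^bsub>\<kappa> a\<^esub>\<close> into
\<open>x\<^bsub>\<kappa> a\<^esub>\<^bsup>wt a\<^esup>\<close>.\<close>

definition cyc_lift :: "'a set \<Rightarrow> ('a \<Rightarrow> nat) \<Rightarrow> ('a \<Rightarrow> nat) \<Rightarrow> ('a \<times> nat \<Rightarrow> nat)" where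
  "cyc_lift V wt \<kappa> = restrict (\<lambda>(a, i). \<kappa> a) (cycV V wt)"

lemma cyc_lift_apply [simp]: "a \<in> V \<Longrightarrow> i < wt a \<Longrightarrow> cyc_lift V wt \<kappa> (a, i) = \<kappa> a"
  by (simp add: cyc_lift_def cycV_def)

lemma inj_on_cyc_lift:
  assumes "\<forall>a\<in>V. 1 \<le> wt a"
  shows "inj_on (cyc_lift V wt) (extensional V)"
proof (rule inj_onI)
  fix \<kappa> \<kappa>' assume "\<kappa> \<in> extensional V" "\<kappa>' \<in> extensional V"
    and lift_eq: "cyc_lift V wt \<kappa> = cyc_lift V wt \<kappa>'"
  have "\<kappa> a = \<kappa>' a" if "a \<in> V" for a
    using fun_cong[OF lift_eq, of "(a, 0)"] that assms by (simp add: Suc_le_eq)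
  with \<open>\<kappa> \<in> extensional V\<close> \<open>\<kappa>' \<in> extensional V\<close> show "\<kappa> = \<kappa>'"
    by (rule extensionalityI)
qed

lemma wmono_cyc_lift:
  assumes "finite V"
  shows "wmono (cycV V wt) (\<lambda>_. 1) (cyc_lift V wt \<kappa>) = wmono V wt \<kappa>"
proof
  fix n
  have "{p \<in> cycV V wt. cyc_lift V wt \<kappa> p = n} = Sigma {a \<in> V. \<kappa> a = n} (\<lambda>a. {..<wt a})"
    by (auto simp: cycV_def)
  then show "wmono (cycV V wt) (\<lambda>_. 1) (cyc_lift V wt \<kappa>) n = wmono V wt \<kappa> n"
    using assms by (simp add: wmono_def card_SigmaI)
qed

lemma cycDo_monotone_le:
  fixes \<mu> :: "'a \<times> nat \<Rightarrow> 'b::preorder"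
  assumes mono: "\<forall>(p, q)\<in>cycDo V wt. \<mu> p \<le> \<mu> q" and "a \<in> V"
  shows "j \<le> k \<Longrightarrow> k < wt a \<Longrightarrow> \<mu> (a, j) \<le> \<mu> (a, k)"
proof (induction k)
  case (Suc k)
  show ?case
  proof (cases "j = Suc k")
    case False
    with Suc have "\<mu> (a, j) \<le> \<mu> (a, k)"
      by simp
    moreover have "((a, k), (a, Suc k)) \<in> cycDo V wt"
      using Suc.prems \<open>a \<in> V\<close> by (auto simp: cycDo_def)
    ultimately show ?thesis
      using mono by (auto intro: order_trans)
  qed simp
qed simp

lemma cycDo_monotone_const:
  fixes \<mu> :: "'a \<times> nat \<Rightarrow> 'b::order"
  assumes mono: "\<forall>(p, q)\<in>cycDo V wt. \<mu> p \<le> \<mu> q" and "a \<in> V" and "i < wt a"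
  shows "\<mu> (a, i) = \<mu> (a, 0)"
proof (cases "2 \<le> wt a")
  case True
  then have "((a, wt a - 1), (a, 0)) \<in> cycDo V wt"
    using \<open>a \<in> V\<close> unfolding cycDo_def by force
  then have "\<mu> (a, wt a - 1) \<le> \<mu> (a, 0)"
    using mono by auto
  moreover have "\<mu> (a, 0) \<le> \<mu> (a, i)" "\<mu> (a, i) \<le> \<mu> (a, wt a - 1)"
    using cycDo_monotone_le[OF mono \<open>a \<in> V\<close>] \<open>i < wt a\<close> by auto
  ultimately show ?thesis
    by (blast intro: order.antisym order_trans)
next
  case False
  with \<open>i < wt a\<close> show ?thesis
    by (cases i) auto
qed

lemma cyc_lift_in_ecd_colourings:
  assumes "\<kappa> \<in> proper_colourings V E" and "\<forall>e\<in>E. e \<subseteq> V" and "\<forall>a\<in>V. v a < wt a"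
  shows "cyc_lift V wt \<kappa> \<in> ecd_colourings (cycV V wt) (dashE E v ori) {} (cycDo V wt)"
proof -
  have "cyc_lift V wt \<kappa> \<in> cycV V wt \<rightarrow>\<^sub>E {1..}"
    using assms(1) by (auto simp: cyc_lift_def cycV_def proper_colourings_def)
  moreover have "cyc_lift V wt \<kappa> p \<noteq> cyc_lift V wt \<kappa> q" if "(p, q) \<in> dashE E v ori" for p q
    using that assms by (auto simp: dashE_def proper_colourings_def)
  moreover have "cyc_lift V wt \<kappa> p \<le> cyc_lift V wt \<kappa> q" if "(p, q) \<in> cycDo V wt" for p q
    using that by (auto simp: cycDo_def)
  ultimately show ?thesis
    by (auto simp: ecd_colourings_def)
qed

lemma ecd_colouring_is_cyc_lift:
  assumes \<mu>: "\<mu> \<in> ecd_colourings (cycV V wt) (dashE E v ori) {} (cycDo V wt)"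
    and "\<forall>e\<in>E. e \<subseteq> V" and v: "\<forall>a\<in>V. v a < wt a"
    and ori: "\<forall>a b. {a, b} \<in> E \<longrightarrow> (ori a b \<longleftrightarrow> \<not> ori b a)"
  defines "\<kappa> \<equiv> restrict (\<lambda>a. \<mu> (a, 0)) V"
  shows "\<kappa> \<in> proper_colourings V E" and "\<mu> = cyc_lift V wt \<kappa>"
proof -
  have mono: "\<forall>(p, q)\<in>cycDo V wt. \<mu> p \<le> \<mu> q"
    and dash: "\<forall>(p, q)\<in>dashE E v ori. \<mu> p \<noteq> \<mu> q"
    and \<mu>_PiE: "\<mu> \<in> cycV V wt \<rightarrow>\<^sub>E {1..}"
    using \<mu> by (auto simp: ecd_colourings_def)
  have const: "\<mu> (a, i) = \<kappa> a" if "a \<in> V" "i < wt a" for a i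
    using cycDo_monotone_const[OF mono that] that by (simp add: \<kappa>_def)
  show "\<mu> = cyc_lift V wt \<kappa>"
  proof
    fix p
    show "\<mu> p = cyc_lift V wt \<kappa> p"
    proof (cases "p \<in> cycV V wt")
      case True
      then obtain a i where "p = (a, i)" "a \<in> V" "i < wt a"
        by (auto simp: cycV_def)
      then show ?thesis
        using const[of a i] by simp
    next
      case False
      then show ?thesis
        using PiE_arb[OF \<mu>_PiE] by (simp add: cyc_lift_def)
    qed
  qed
  have "\<kappa> a \<noteq> \<kappa> b" if "{a, b} \<in> E" for a b
  proof -
    have "a \<in> V" "b \<in> V"
      using that assms(2) by auto
    have "{b, a} \<in> E"
      using that by (simp add: insert_commute)
    then have "((a, v a), (b, v b)) \<in> dashE E v ori \<or> ((b, v b), (a, v a)) \<in> dashE E v ori"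
      using that ori unfolding dashE_def by blast
    with dash have "\<mu> (a, v a) \<noteq> \<mu> (b, v b)"
      by auto
    with const v \<open>a \<in> V\<close> \<open>b \<in> V\<close> show ?thesis
      by simp
  qed
  moreover have "\<kappa> \<in> V \<rightarrow>\<^sub>E {1..}"
  proof (rule PiE_I)
    show "\<kappa> a \<in> {1..}" if "a \<in> V" for a
      using PiE_mem[OF \<mu>_PiE, of "(a, 0)"] that v by (auto simp: \<kappa>_def cycV_def)
  qed (simp add: \<kappa>_def)
  ultimately show "\<kappa> \<in> proper_colourings V E"
    by (simp add: proper_colourings_def)
qed

lemma ecd_colourings_eq_cyc_lift_image:
  assumes "\<forall>e\<in>E. e \<subseteq> V" and "\<forall>a\<in>V. v a < wt a"
    and "\<forall>a b. {a, b} \<in> E \<longrightarrow> (ori a b \<longleftrightarrow> \<not> ori b a)"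
  shows "ecd_colourings (cycV V wt) (dashE E v ori) {} (cycDo V wt)
           = cyc_lift V wt ` proper_colourings V E"
proof
  show "ecd_colourings (cycV V wt) (dashE E v ori) {} (cycDo V wt)
          \<subseteq> cyc_lift V wt ` proper_colourings V E"
    using ecd_colouring_is_cyc_lift[OF _ assms] by (intro subsetI) (rule image_eqI)
  show "cyc_lift V wt ` proper_colourings V E
          \<subseteq> ecd_colourings (cycV V wt) (dashE E v ori) {} (cycDo V wt)"
    using cyc_lift_in_ecd_colourings[OF _ assms(1,2)] by (rule image_subsetI)
qed

theorem mainTheorem13:
  fixes V :: "'a set" and E :: "'a set set" and wt :: "'a \<Rightarrow> nat"
    and v :: "'a \<Rightarrow> nat" and ori :: "'a \<Rightarrow> 'a \<Rightarrow> bool"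
  assumes "weighted_graph V E wt"
    and "\<forall>a\<in>V. v a < wt a"
    and "\<forall>a b. {a, b} \<in> E \<longrightarrow> (ori a b \<longleftrightarrow> \<not> ori b a)"
  shows "XH V E wt = XG (cycV V wt) (dashE E v ori) {} (cycDo V wt)"
proof
  fix m
  have "finite V" and edges: "\<forall>e\<in>E. e \<subseteq> V" and "\<forall>a\<in>V. 1 \<le> wt a"
    using assms(1) by (auto simp: weighted_graph_def)
  let ?P = "{\<kappa> \<in> proper_colourings V E. wmono V wt \<kappa> = m}"
  have "{\<mu> \<in> ecd_colourings (cycV V wt) (dashE E v ori) {} (cycDo V wt).
          wmono (cycV V wt) (\<lambda>_. 1) \<mu> = m} = cyc_lift V wt ` ?P"
    using ecd_colourings_eq_cyc_lift_image[OF edges assms(2,3)] wmono_cyc_lift[OF \<open>finite V\<close>]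
    by auto
  moreover have "inj_on (cyc_lift V wt) ?P"
    using inj_on_cyc_lift[OF \<open>\<forall>a\<in>V. 1 \<le> wt a\<close>]
    by (rule inj_on_subset) (auto simp: proper_colourings_def PiE_def)
  ultimately show "XH V E wt m = XG (cycV V wt) (dashE E v ori) {} (cycDo V wt) m"
    by (simp add: XH_def XG_def card_image)
qed

end
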